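(* Let $n\ge 2$ and let $\mathcal M_{2n}$ be the Möbius ladder on $2n$ vertices. Then for every vertex $v$ of $\mathcal M_{2n}$, $\gamma_M(\mathcal M_{2n}-v)=\gamma_M(\mathcal M_{2n})-1$; that is, every vertex of $\mathcal M_{2n}$ is a 1-critical-vertex.
   Context: The Möbius ladder $\mathcal M_{2n}$ has vertices $v_1,\dots,v_{2n}$, the cycle edges $v_iv_{i+1}$ ($i=1,\dots,2n$, indices mod $2n$) and the rungs $v_iv_{n+i}$ ($i=1,\dots,n$). $\gamma_M(H)$ is the maximum genus of a connected graph $H$ (largest $k$ such that $H$ embeds cellularly in the orientable surface of genus $k$). A vertex $v$ is a 1-critical-vertex of $G$ if $G-v$ is connected and $\gamma_M(G-v)=\gamma_M(G)-1$. *)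

theory Defs
  imports Main
begin

definition simple_graph :: "'a set \<Rightarrow> 'a set set \<Rightarrow> bool" where
  "simple_graph V E \<longleftrightarrow> finite V \<and> (\<forall>e\<in>E. e \<subseteq> V \<and> card e = 2)"

definition adj :: "'a set set \<Rightarrow> 'a \<Rightarrow> 'a \<Rightarrow> bool" where
  "adj E u v \<longleftrightarrow> u \<noteq> v \<and> {u, v} \<in> E"

definition graph_connected :: "'a set \<Rightarrow> 'a set set \<Rightarrow> bool" where
  "graph_connected V E \<longleftrightarrow> V \<noteq> {} \<and>
     (\<forall>u\<in>V. \<forall>v\<in>V. (u, v) \<in> {(x, y). adj E x y}\<^sup>*)"

definition del_vertex_V :: "'a set \<Rightarrow> 'a \<Rightarrow> 'a set" where
  "del_vertex_V V v = V - {v}"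

definition del_vertex_E :: "'a set set \<Rightarrow> 'a \<Rightarrow> 'a set set" where
  "del_vertex_E E v = {e \<in> E. v \<notin> e}"

text \<open>Orientable cellular embeddings of a connected graph, described combinatorially
  by rotation systems (Heffter--Edmonds). Darts are oriented edges (u,v).\<close>

definition darts :: "'a set set \<Rightarrow> ('a \<times> 'a) set" where
  "darts E = {(u, v). adj E u v}"

definition rotation_system :: "'a set set \<Rightarrow> ('a \<times> 'a \<Rightarrow> 'a \<times> 'a) \<Rightarrow> bool" where
  "rotation_system E rho \<longleftrightarrow>
     bij_betw rho (darts E) (darts E) \<and>
     (\<forall>d. d \<notin> darts E \<longrightarrow> rho d = d) \<and>
     (\<forall>d\<in>darts E. fst (rho d) = fst d) \<and>
     (\<forall>d\<in>darts E. \<forall>d'\<in>darts E. fst d = fst d' \<longrightarrow> (\<exists>k. (rho ^^ k) d = d'))"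

definition face_perm :: "('a \<times> 'a \<Rightarrow> 'a \<times> 'a) \<Rightarrow> 'a \<times> 'a \<Rightarrow> 'a \<times> 'a" where
  "face_perm rho = (\<lambda>(u, v). rho (v, u))"

definition faces :: "'a set set \<Rightarrow> ('a \<times> 'a \<Rightarrow> 'a \<times> 'a) \<Rightarrow> ('a \<times> 'a) set set" where
  "faces E rho = (\<lambda>d. {(face_perm rho ^^ k) d | k. True}) ` darts E"

text \<open>Genus of the orientable cellular embedding given by rho: V - E + F = 2 - 2g.\<close>
definition embedding_genus :: "'a set \<Rightarrow> 'a set set \<Rightarrow> ('a \<times> 'a \<Rightarrow> 'a \<times> 'a) \<Rightarrow> int" where
  "embedding_genus V E rho =
     (2 - int (card V) + int (card E) - int (card (faces E rho))) div 2"

definition max_genus :: "'a set \<Rightarrow> 'a set set \<Rightarrow> int" where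
  "max_genus V E = Max {embedding_genus V E rho | rho. rotation_system E rho}"

definition one_critical_vertex :: "'a set \<Rightarrow> 'a set set \<Rightarrow> 'a \<Rightarrow> bool" where
  "one_critical_vertex V E v \<longleftrightarrow>
     v \<in> V \<and>
     graph_connected (del_vertex_V V v) (del_vertex_E E v) \<and>
     max_genus (del_vertex_V V v) (del_vertex_E E v) = max_genus V E - 1"

text \<open>Moebius ladder M_{2n}: vertex v_i is represented by i - 1 (i = 1..2n).\<close>
definition mobius_V :: "nat \<Rightarrow> nat set" where
  "mobius_V n = {0..<2 * n}"

definition mobius_E :: "nat \<Rightarrow> nat set set" where
  "mobius_E n = {{i, Suc i mod (2 * n)} | i. i < 2 * n} \<union> {{i, i + n} | i. i < n}"

end

theory Submission
  imports Defs "HOL-Combinatorics.Permutations"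
begin

(* A cellular embedding has at least one face, so by Euler's formula the maximum genus of a
   connected graph is at most beta div 2, where beta = |E| - |V| + 1 is its cycle rank, and the
   bound is attained as soon as some rotation system has at most 1 + (beta mod 2) faces.
   For M_2n we have beta = n + 1, and deleting a vertex of degree 3 lowers beta by 2.
   Both bounds are attained.  Under the rotation prv, rung, nxt at every vertex a face runs
   along the two rails of the ladder, changing rails at every rung; following these walks
   around the ladder shows that there are at most two faces, and only one when beta is even,
   once the rotation at v_1 is reversed for odd n (in M_2n) and the deleted vertex v_1 is
   skipped (in M_2n - v_1).  Finally the cyclic shift is an automorphism of M_2n, so every
   vertex-deleted subgraph is isomorphic to M_2n - v_1. *)

section \<open>Faces as orbits of the face permutation\<close>

lemma adj_sym: "adj E u v \<Longrightarrow> adj E v u"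
  by (auto simp: adj_def insert_commute)

definition forward_orbit :: "('b \<Rightarrow> 'b) \<Rightarrow> 'b \<Rightarrow> 'b set" where
  "forward_orbit f x = {(f ^^ k) x | k. True}"

lemma forward_orbit_refl [simp]: "x \<in> forward_orbit f x"
  unfolding forward_orbit_def by (auto intro: exI[of _ 0])

lemma forward_orbit_step:
  assumes "y \<in> forward_orbit f x"
  shows "f y \<in> forward_orbit f x"
proof -
  obtain k where "y = (f ^^ k) x"
    using assms by (auto simp: forward_orbit_def)
  then have "f y = (f ^^ Suc k) x" by simp
  then show ?thesis unfolding forward_orbit_def by blast
qed

lemma forward_orbit_step_eq:
  "y \<in> forward_orbit f x \<Longrightarrow> f y = z \<Longrightarrow> z \<in> forward_orbit f x"
  using forward_orbit_step by metis

lemma forward_orbit_trans: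
  assumes "y \<in> forward_orbit f x" "z \<in> forward_orbit f y"
  shows "z \<in> forward_orbit f x"
proof -
  obtain j k where "y = (f ^^ j) x" "z = (f ^^ k) y"
    using assms by (auto simp: forward_orbit_def)
  then have "z = (f ^^ (k + j)) x" by (simp add: funpow_add)
  then show ?thesis
    unfolding forward_orbit_def by blast
qed

lemma forward_orbit_stepI:
  assumes "f x = y" "z \<in> forward_orbit f y"
  shows "z \<in> forward_orbit f x"
  using forward_orbit_step[OF forward_orbit_refl, of f x] assms forward_orbit_trans by simp

lemma forward_orbit_sym:
  assumes "inj f" "finite (forward_orbit f x)" "y \<in> forward_orbit f x"
  shows "x \<in> forward_orbit f y"
proof -
  have "finite {y. \<exists>k. y = (f ^^ k) x}"
    using assms(2) by (simp add: forward_orbit_def)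
  then obtain p where p: "p > 0" "(f ^^ p) x = x"
    using funpow_inj_finite[OF assms(1)] by blast
  obtain k where y: "y = (f ^^ k) x"
    using assms(3) by (auto simp: forward_orbit_def)
  have "(f ^^ (p * k - k)) y = (f ^^ (p * k - k + k)) x"
    by (simp add: y funpow_add)
  also have "p * k - k + k = p * k"
    using p(1) by simp
  also have "(f ^^ (p * k)) x = x"
    using funpow_mod_eq[where n=p and m="p * k", OF p(2)] by simp
  finally show ?thesis
    unfolding forward_orbit_def by blast
qed

lemma forward_orbit_descending:
  fixes g :: "nat \<Rightarrow> 'a"
  assumes step: "\<And>v. lo < v \<Longrightarrow> v \<le> hi \<Longrightarrow> f (g v) = g (v - 1)"
    and "lo \<le> v" "v \<le> hi"
  shows "g v \<in> forward_orbit f (g hi)"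
  using assms(3,2)
proof (induction v rule: inc_induct)
  case (step w)
  then have "f (g (Suc w)) \<in> forward_orbit f (g hi)"
    by (intro forward_orbit_step) simp
  moreover have "f (g (Suc w)) = g w"
    using assms(1)[of "Suc w"] step by simp
  ultimately show ?case
    by simp
qed simp

lemma rotation_system_permutes:
  assumes "rotation_system E rho"
  shows "rho permutes darts E"
  using assms unfolding rotation_system_def by (blast intro: bij_imp_permutes)

lemma rotation_system_fst:
  "rotation_system E rho \<Longrightarrow> d \<in> darts E \<Longrightarrow> fst (rho d) = fst d"
  unfolding rotation_system_def by blast

lemma rotation_system_transitive:
  "rotation_system E rho \<Longrightarrow> d \<in> darts E \<Longrightarrow> d' \<in> darts E \<Longrightarrow> fst d = fst d'
    \<Longrightarrow> \<exists>k. (rho ^^ k) d = d'"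
  unfolding rotation_system_def by blast

lemma inj_face_perm:
  assumes "rotation_system E rho"
  shows "inj (face_perm rho)"
proof -
  have "face_perm rho = rho \<circ> prod.swap"
    by (simp add: face_perm_def fun_eq_iff)
  then show ?thesis
    using permutes_inj[OF rotation_system_permutes[OF assms]] by (simp add: inj_compose)
qed

lemma face_perm_in_darts:
  assumes "rotation_system E rho" "d \<in> darts E"
  shows "face_perm rho d \<in> darts E"
proof -
  obtain u v where "d = (u, v)" by (cases d)
  then have "(v, u) \<in> darts E"
    using assms(2) adj_sym by (auto simp: darts_def)
  then show ?thesis
    using permutes_in_image[OF rotation_system_permutes[OF assms(1)]] \<open>d = (u, v)\<close>
    by (simp add: face_perm_def)
qed

lemma forward_orbit_face_perm_subset:
  assumes "rotation_system E rho" "d \<in> darts E"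
  shows "forward_orbit (face_perm rho) d \<subseteq> darts E"
proof
  fix x assume "x \<in> forward_orbit (face_perm rho) d"
  then obtain k where "x = (face_perm rho ^^ k) d"
    by (auto simp: forward_orbit_def)
  then show "x \<in> darts E"
    using assms by (induction k arbitrary: x) (auto intro: face_perm_in_darts)
qed

lemma faces_eq_forward_orbits: "faces E rho = forward_orbit (face_perm rho) ` darts E"
  by (simp add: faces_def forward_orbit_def)

lemma face_perm_orbit_sym:
  assumes rho: "rotation_system E rho" and fin: "finite (darts E)"
    and d: "d \<in> darts E" and d': "d' \<in> forward_orbit (face_perm rho) d"
  shows "d \<in> forward_orbit (face_perm rho) d'"
  using forward_orbit_sym[OF inj_face_perm[OF rho]
      finite_subset[OF forward_orbit_face_perm_subset[OF rho d] fin] d'] .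

lemma forward_orbit_face_perm_eq:
  assumes rho: "rotation_system E rho" and fin: "finite (darts E)"
    and d0: "d0 \<in> darts E" and d: "d \<in> forward_orbit (face_perm rho) d0"
  shows "forward_orbit (face_perm rho) d = forward_orbit (face_perm rho) d0"
  using face_perm_orbit_sym[OF rho fin d0 d] d by (auto intro: forward_orbit_trans)

lemma card_faces_le:
  assumes rho: "rotation_system E rho" and fin: "finite (darts E)" and D: "D \<subseteq> darts E"
    and cover: "\<And>d. d \<in> darts E \<Longrightarrow> \<exists>d0\<in>D. d \<in> forward_orbit (face_perm rho) d0"
  shows "card (faces E rho) \<le> card D"
proof -
  let ?orb = "forward_orbit (face_perm rho)"
  have "faces E rho \<subseteq> ?orb ` D"
  proof
    fix F assume "F \<in> faces E rho"
    then obtain d where d: "d \<in> darts E" "F = ?orb d"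
      by (auto simp: faces_eq_forward_orbits)
    then obtain d0 where "d0 \<in> D" "d \<in> ?orb d0"
      using cover by blast
    then show "F \<in> ?orb ` D"
      using forward_orbit_face_perm_eq[OF rho fin] D d by blast
  qed
  then have "card (faces E rho) \<le> card (?orb ` D)"
    using D fin by (intro card_mono) (auto intro: finite_subset)
  also have "\<dots> \<le> card D"
    using D fin by (intro card_image_le) (rule finite_subset)
  finally show ?thesis .
qed

section \<open>Maximum genus and cycle rank\<close>

definition cycle_rank :: "'a set \<Rightarrow> 'a set set \<Rightarrow> int" where
  "cycle_rank V E = int (card E) - int (card V) + 1"

lemma embedding_genus_cycle_rank:
  "embedding_genus V E rho = (cycle_rank V E + 1 - int (card (faces E rho))) div 2"
  by (simp add: embedding_genus_def cycle_rank_def algebra_simps)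

lemma embedding_genus_le_cycle_rank_div_2:
  assumes "finite (darts E)" "darts E \<noteq> {}"
  shows "embedding_genus V E rho \<le> cycle_rank V E div 2"
proof -
  have "finite (faces E rho)" "faces E rho \<noteq> {}"
    using assms by (simp_all add: faces_def)
  then have "card (faces E rho) \<ge> 1"
    by (simp add: Suc_leI card_gt_0_iff)
  then show ?thesis
    unfolding embedding_genus_cycle_rank by (intro zdiv_mono1) auto
qed

lemma finite_embedding_genera:
  assumes "finite (darts E)" "darts E \<noteq> {}"
  shows "finite {embedding_genus V E rho | rho. rotation_system E rho}"
proof -
  have "embedding_genus V E rho \<ge> (cycle_rank V E + 1 - int (card (darts E))) div 2" for rho
  proof -
    have "card (faces E rho) \<le> card (darts E)"
      using assms by (simp add: faces_def card_image_le)
    then show ?thesis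
      unfolding embedding_genus_cycle_rank by (intro zdiv_mono1) auto
  qed
  then have "{embedding_genus V E rho | rho. rotation_system E rho}
      \<subseteq> {(cycle_rank V E + 1 - int (card (darts E))) div 2 .. cycle_rank V E div 2}"
    using embedding_genus_le_cycle_rank_div_2[OF assms] by auto
  then show ?thesis
    by (rule finite_subset) simp
qed

lemma max_genus_eq_cycle_rank_div_2:
  assumes fin: "finite (darts E)" and ne: "darts E \<noteq> {}"
    and rho: "rotation_system E rho"
    and few_faces: "int (card (faces E rho)) \<le> 1 + cycle_rank V E mod 2"
  shows "max_genus V E = cycle_rank V E div 2"
proof -
  let ?\<beta> = "cycle_rank V E"
  have "?\<beta> - ?\<beta> mod 2 \<le> ?\<beta> + 1 - int (card (faces E rho))"
    using few_faces by simp
  then have "(?\<beta> - ?\<beta> mod 2) div 2 \<le> embedding_genus V E rho"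
    unfolding embedding_genus_cycle_rank by (rule zdiv_mono1) simp
  then have "?\<beta> div 2 = embedding_genus V E rho"
    using embedding_genus_le_cycle_rank_div_2[OF fin ne, of V rho]
    by (simp add: minus_mod_eq_mult_div)
  then have "?\<beta> div 2 \<in> {embedding_genus V E r | r. rotation_system E r}"
    using rho by blast
  moreover have "y \<le> ?\<beta> div 2" if "y \<in> {embedding_genus V E r | r. rotation_system E r}" for y
    using that embedding_genus_le_cycle_rank_div_2[OF fin ne] by auto
  ultimately show ?thesis
    unfolding max_genus_def by (intro Max_eqI[OF finite_embedding_genera[OF fin ne]])
qed

lemma adj_del_vertex_E:
  "adj (del_vertex_E E v) a b \<longleftrightarrow> adj E a b \<and> a \<noteq> v \<and> b \<noteq> v"
  by (auto simp: adj_def del_vertex_E_def)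

lemma edges_at_vertex:
  assumes "simple_graph V E"
  shows "{e \<in> E. v \<in> e} = (\<lambda>w. {v, w}) ` {w. adj E v w}"
proof (intro equalityI subsetI)
  fix e assume "e \<in> {e \<in> E. v \<in> e}"
  then have "e \<in> E" "v \<in> e" "card e = 2"
    using assms by (auto simp: simple_graph_def)
  then obtain w where "e = {v, w}" "w \<noteq> v"
    by (auto simp: card_2_iff doubleton_eq_iff)
  then show "e \<in> (\<lambda>w. {v, w}) ` {w. adj E v w}"
    using \<open>e \<in> E\<close> by (auto simp: adj_def)
qed (auto simp: adj_def)

lemma cycle_rank_del_vertex:
  assumes G: "simple_graph V E" and v: "v \<in> V"
  shows "cycle_rank (del_vertex_V V v) (del_vertex_E E v)
    = cycle_rank V E - int (card {w. adj E v w}) + 1"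
proof -
  have finV: "finite V" and finE: "finite E"
    using G by (auto simp: simple_graph_def intro: finite_subset[of E "Pow V"])
  have "inj_on (\<lambda>w. {v, w}) {w. adj E v w}"
    by (auto intro!: inj_onI simp: adj_def doubleton_eq_iff)
  then have deg: "card {e \<in> E. v \<in> e} = card {w. adj E v w}"
    by (simp add: edges_at_vertex[OF G] card_image)
  have "del_vertex_E E v = E - {e \<in> E. v \<in> e}"
    by (auto simp: del_vertex_E_def)
  then have "card (del_vertex_E E v) = card E - card {w. adj E v w}"
    using finE by (simp add: card_Diff_subset deg)
  moreover have "card {w. adj E v w} \<le> card E"
    using finE deg by (metis (no_types, lifting) card_mono mem_Collect_eq subsetI)
  moreover have "card (del_vertex_V V v) = card V - 1" "card V \<ge> 1"
    using finV v by (auto simp: del_vertex_V_def card_gt_0_iff Suc_le_eq)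
  ultimately show ?thesis
    by (simp add: cycle_rank_def of_nat_diff)
qed

section \<open>Rotation systems given by local rotations\<close>

(* R u v is the neighbour of u that follows v in the cyclic order around u. *)
definition rotation_of ::
  "'a set set \<Rightarrow> ('a \<Rightarrow> 'a \<Rightarrow> 'a) \<Rightarrow> 'a \<times> 'a \<Rightarrow> 'a \<times> 'a" where
  "rotation_of E R = (\<lambda>(u, v). if adj E u v then (u, R u v) else (u, v))"

lemma funpow_rotation_of:
  assumes closed: "\<And>u v. adj E u v \<Longrightarrow> adj E u (R u v)" and uv: "adj E u v"
  shows "(rotation_of E R ^^ k) (u, v) = (u, (R u ^^ k) v) \<and> adj E u ((R u ^^ k) v)"
  by (induction k) (simp_all add: uv closed rotation_of_def)

lemma rotation_system_rotation_of:
  assumes fin: "finite (darts E)"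
    and closed: "\<And>u v. adj E u v \<Longrightarrow> adj E u (R u v)"
    and inj: "\<And>u v w. adj E u v \<Longrightarrow> adj E u w \<Longrightarrow> R u v = R u w \<Longrightarrow> v = w"
    and cyclic: "\<And>u v w. adj E u v \<Longrightarrow> adj E u w \<Longrightarrow> \<exists>k. (R u ^^ k) v = w"
  shows "rotation_system E (rotation_of E R)"
  unfolding rotation_system_def
proof (intro conjI allI ballI impI)
  have into: "rotation_of E R ` darts E \<subseteq> darts E"
    using closed by (auto simp: rotation_of_def darts_def)
  have "inj_on (rotation_of E R) (darts E)"
    using inj by (auto intro!: inj_onI simp: rotation_of_def darts_def)
  then show "bij_betw (rotation_of E R) (darts E) (darts E)"
    using endo_inj_surj[OF fin into] by (simp add: bij_betw_def)
next
  fix d assume "d \<notin> darts E"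
  then show "rotation_of E R d = d"
    by (cases d) (simp add: rotation_of_def darts_def)
next
  fix d assume "d \<in> darts E"
  then show "fst (rotation_of E R d) = fst d"
    by (auto simp: rotation_of_def darts_def)
next
  fix d d' assume "d \<in> darts E" "d' \<in> darts E" "fst d = fst d'"
  then obtain u v w where d: "d = (u, v)" "d' = (u, w)" "adj E u v" "adj E u w"
    by (cases d, cases d') (auto simp: darts_def)
  then obtain k where "(R u ^^ k) v = w"
    using cyclic by blast
  then show "\<exists>k. (rotation_of E R ^^ k) d = d'"
    using funpow_rotation_of[OF closed d(3)] d by auto
qed

lemma face_perm_rotation_of: "adj E a b \<Longrightarrow> face_perm (rotation_of E R) (a, b) = (b, R b a)"
  by (simp add: face_perm_def rotation_of_def adj_sym)

lemma funpow_three_cycle: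
  assumes "w = v \<or> w = f v \<or> w = f (f v)"
  shows "\<exists>k. (f ^^ k) v = w"
proof -
  have "(f ^^ 0) v = v" "(f ^^ 1) v = f v" "(f ^^ 2) v = f (f v)"
    by (simp_all add: numeral_2_eq_2)
  then show ?thesis
    using assms by metis
qed

section \<open>Invariance under graph isomorphisms\<close>

lemma inj_image_of_inj: "inj f \<Longrightarrow> inj ((`) f)"
  by (simp add: inj_def inj_image_eq_iff)

definition conj_rotation ::
  "('a \<Rightarrow> 'a) \<Rightarrow> ('a \<times> 'a \<Rightarrow> 'a \<times> 'a) \<Rightarrow> 'a \<times> 'a \<Rightarrow> 'a \<times> 'a" where
  "conj_rotation f rho = map_prod f f \<circ> rho \<circ> map_prod (inv f) (inv f)"

context
  fixes f :: "'a \<Rightarrow> 'a"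
  assumes f: "bij f"
begin

lemma bij_inv_cancel [simp]: "f (inv f x) = x" "inv f (f x) = x"
  using f by (simp_all add: bij_is_inj bij_is_surj surj_f_inv_f)

lemma map_prod_inv_cancel [simp]:
  "map_prod f f (map_prod (inv f) (inv f) d) = d"
  "map_prod (inv f) (inv f) (map_prod f f d) = d"
  by (cases d; simp)+

lemma inj_image_f: "inj ((`) f)"
  using bij_is_inj[OF f] by (rule inj_image_of_inj)

lemma inj_map_prod_f: "inj (map_prod f f)"
  using bij_is_inj[OF f] by (simp add: prod.inj_map)

lemma adj_image_iff: "adj ((`) f ` E) u v \<longleftrightarrow> adj E (inv f u) (inv f v)"
proof -
  have "{u, v} \<in> (`) f ` E \<longleftrightarrow> f ` {inv f u, inv f v} \<in> (`) f ` E"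
    by simp
  also have "\<dots> \<longleftrightarrow> {inv f u, inv f v} \<in> E"
    by (rule inj_image_mem_iff[OF inj_image_f])
  finally have "{u, v} \<in> (`) f ` E \<longleftrightarrow> {inv f u, inv f v} \<in> E" .
  moreover have "u \<noteq> v \<longleftrightarrow> inv f u \<noteq> inv f v"
    by (metis bij_inv_cancel(1))
  ultimately show ?thesis
    by (simp add: adj_def)
qed

lemma darts_image_iff: "d \<in> darts ((`) f ` E) \<longleftrightarrow> map_prod (inv f) (inv f) d \<in> darts E"
  by (cases d) (simp add: darts_def adj_image_iff)

lemma darts_image: "darts ((`) f ` E) = map_prod f f ` darts E"
proof (intro equalityI subsetI)
  fix d assume "d \<in> darts ((`) f ` E)"
  then have "map_prod (inv f) (inv f) d \<in> darts E"
    by (simp add: darts_image_iff)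
  then show "d \<in> map_prod f f ` darts E"
    by (rule rev_image_eqI) simp
next
  fix d assume "d \<in> map_prod f f ` darts E"
  then show "d \<in> darts ((`) f ` E)"
    by (auto simp: darts_image_iff)
qed

lemma funpow_conj_rotation:
  "(conj_rotation f rho ^^ k) d = map_prod f f ((rho ^^ k) (map_prod (inv f) (inv f) d))"
  by (induction k arbitrary: d) (simp_all add: conj_rotation_def)

lemma rotation_system_conj_rotation:
  assumes rho: "rotation_system E rho"
  shows "rotation_system ((`) f ` E) (conj_rotation f rho)"
  unfolding rotation_system_def
proof (intro conjI allI ballI impI)
  have to_img: "bij_betw (map_prod f f) (darts E) (darts ((`) f ` E))"
    using inj_on_subset[OF inj_map_prod_f subset_UNIV] by (simp add: darts_image bij_betw_def)
  have from_img: "bij_betw (map_prod (inv f) (inv f)) (darts ((`) f ` E)) (darts E)"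
    by (rule bij_betw_byWitness[where f' = "map_prod f f"]) (auto simp: darts_image)
  show "bij_betw (conj_rotation f rho) (darts ((`) f ` E)) (darts ((`) f ` E))"
    unfolding conj_rotation_def
    using permutes_imp_bij[OF rotation_system_permutes[OF rho]]
    by (intro bij_betw_trans[OF from_img] bij_betw_trans[OF _ to_img])
next
  fix d assume "d \<notin> darts ((`) f ` E)"
  then show "conj_rotation f rho d = d"
    using permutes_not_in[OF rotation_system_permutes[OF rho]]
    by (simp add: conj_rotation_def darts_image_iff)
next
  fix d assume "d \<in> darts ((`) f ` E)"
  then have "fst (rho (map_prod (inv f) (inv f) d)) = inv f (fst d)"
    using rotation_system_fst[OF rho] by (simp add: darts_image_iff)
  then show "fst (conj_rotation f rho d) = fst d"
    by (simp add: conj_rotation_def map_prod_def split_beta)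
next
  fix d d' assume d: "d \<in> darts ((`) f ` E)" and d': "d' \<in> darts ((`) f ` E)"
    and fst_eq: "fst d = fst d'"
  have "fst (map_prod (inv f) (inv f) d) = fst (map_prod (inv f) (inv f) d')"
    using fst_eq by (simp add: fst_map_prod)
  then obtain k where "(rho ^^ k) (map_prod (inv f) (inv f) d) = map_prod (inv f) (inv f) d'"
    using rotation_system_transitive[OF rho] d d' unfolding darts_image_iff by blast
  then have "(conj_rotation f rho ^^ k) d = d'"
    by (simp add: funpow_conj_rotation)
  then show "\<exists>k. (conj_rotation f rho ^^ k) d = d'" ..
qed

lemma face_perm_conj_rotation:
  "face_perm (conj_rotation f rho) = conj_rotation f (face_perm rho)"
  by (simp add: fun_eq_iff face_perm_def conj_rotation_def)

lemma card_faces_conj_rotation: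
  "card (faces ((`) f ` E) (conj_rotation f rho)) = card (faces E rho)"
proof -
  have orbit: "forward_orbit (face_perm (conj_rotation f rho)) (map_prod f f d)
      = map_prod f f ` forward_orbit (face_perm rho) d" for d
  proof -
    have iter: "(face_perm (conj_rotation f rho) ^^ k) (map_prod f f d)
        = map_prod f f ((face_perm rho ^^ k) d)" for k
      by (simp add: face_perm_conj_rotation funpow_conj_rotation)
    show ?thesis
      unfolding forward_orbit_def iter by (simp only: setcompr_eq_image image_image)
  qed
  have faces_conj: "faces ((`) f ` E) (conj_rotation f rho)
      = forward_orbit (face_perm (conj_rotation f rho)) ` map_prod f f ` darts E"
    by (simp only: faces_eq_forward_orbits darts_image)
  have orbits_img: "forward_orbit (face_perm (conj_rotation f rho)) ` map_prod f f ` darts E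
      = (`) (map_prod f f) ` forward_orbit (face_perm rho) ` darts E"
    by (simp only: orbit image_image)
  have "faces ((`) f ` E) (conj_rotation f rho) = (`) (map_prod f f) ` faces E rho"
    unfolding faces_conj orbits_img faces_eq_forward_orbits[of E rho] ..
  moreover have "card ((`) (map_prod f f) ` faces E rho) = card (faces E rho)"
    using inj_on_subset[OF inj_image_of_inj[OF inj_map_prod_f] subset_UNIV] by (rule card_image)
  ultimately show ?thesis
    by simp
qed

lemma embedding_genus_image:
  "embedding_genus (f ` V) ((`) f ` E) (conj_rotation f rho) = embedding_genus V E rho"
proof -
  have "card ((`) f ` E) = card E"
    using card_image[OF inj_on_subset[OF inj_image_f subset_UNIV]] .
  moreover have "card (f ` V) = card V"
    using card_image[OF inj_on_subset[OF bij_is_inj[OF f] subset_UNIV]] .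
  ultimately show ?thesis
    by (simp add: embedding_genus_def card_faces_conj_rotation)
qed

lemma embedding_genera_image_subset:
  "{embedding_genus V E rho | rho. rotation_system E rho} \<subseteq>
   {embedding_genus (f ` V) ((`) f ` E) rho | rho. rotation_system ((`) f ` E) rho}"
proof
  fix x assume "x \<in> {embedding_genus V E rho | rho. rotation_system E rho}"
  then obtain rho where "rotation_system E rho" "x = embedding_genus V E rho"
    by blast
  then show "x \<in> {embedding_genus (f ` V) ((`) f ` E) rho | rho. rotation_system ((`) f ` E) rho}"
    by (intro CollectI exI[of _ "conj_rotation f rho"] conjI)
      (simp_all add: embedding_genus_image rotation_system_conj_rotation)
qed

lemma graph_connected_image:
  assumes "graph_connected V E"
  shows "graph_connected (f ` V) ((`) f ` E)"
proof -
  have "(f a, f b) \<in> {(x, y). adj ((`) f ` E) x y}\<^sup>*" if "(a, b) \<in> {(x, y). adj E x y}\<^sup>*" for a b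
    using that
  proof (induction rule: rtrancl_induct)
    case (step y z)
    then have "(f y, f z) \<in> {(x, y). adj ((`) f ` E) x y}"
      by (simp add: adj_image_iff)
    with step.IH show ?case
      by (rule rtrancl_into_rtrancl)
  qed simp
  then show ?thesis
    using assms unfolding graph_connected_def by auto
qed

lemma del_vertex_V_image: "del_vertex_V (f ` V) (f v) = f ` del_vertex_V V v"
  using f by (auto simp: del_vertex_V_def bij_is_inj inj_eq)

lemma del_vertex_E_image: "del_vertex_E ((`) f ` E) (f v) = (`) f ` del_vertex_E E v"
  using bij_is_inj[OF f] by (auto simp: del_vertex_E_def inj_image_mem_iff inj_eq)

end

lemma max_genus_image:
  fixes f :: "'a \<Rightarrow> 'a"
  assumes f: "bij f"
  shows "max_genus (f ` V) ((`) f ` E) = max_genus V E"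
proof -
  have inv_image_eqs: "inv f ` f ` V = V" "(`) (inv f) ` (`) f ` E = E"
    using bij_is_inj[OF f] by (simp_all add: image_image image_inv_f_f)
  have "{embedding_genus (f ` V) ((`) f ` E) rho | rho. rotation_system ((`) f ` E) rho}
      \<subseteq> {embedding_genus V E rho | rho. rotation_system E rho}"
    using embedding_genera_image_subset[OF bij_imp_bij_inv[OF f], of "f ` V" "(`) f ` E"]
    unfolding inv_image_eqs .
  then have "{embedding_genus (f ` V) ((`) f ` E) rho | rho. rotation_system ((`) f ` E) rho}
      = {embedding_genus V E rho | rho. rotation_system E rho}"
    using embedding_genera_image_subset[OF f, of V E] by (rule subset_antisym)
  then show ?thesis
    by (simp add: max_genus_def)
qed

section \<open>Rotations of the Moebius ladder and walks along its rails\<close>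

definition nxt :: "nat \<Rightarrow> nat \<Rightarrow> nat" where
  "nxt n u = (if u = 2 * n - 1 then 0 else Suc u)"

definition prv :: "nat \<Rightarrow> nat \<Rightarrow> nat" where
  "prv n u = (if u = 0 then 2 * n - 1 else u - 1)"

definition rung :: "nat \<Rightarrow> nat \<Rightarrow> nat" where
  "rung n u = (if u < n then u + n else u - n)"

definition rot_std :: "nat \<Rightarrow> nat \<Rightarrow> nat \<Rightarrow> nat" where
  "rot_std n u v = (if v = prv n u then rung n u else if v = rung n u then nxt n u else prv n u)"

definition rot_rev :: "nat \<Rightarrow> nat \<Rightarrow> nat \<Rightarrow> nat" where
  "rot_rev n u v = (if v = nxt n u then rung n u else if v = rung n u then prv n u else nxt n u)"

(* For odd n the standard rotation has three faces, the cycle traversed backwards and two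
   faces along the rails; reversing the rotation at vertex 0, where all three meet, merges them. *)
definition mobius_rot :: "nat \<Rightarrow> nat \<Rightarrow> nat \<Rightarrow> nat" where
  "mobius_rot n u = (if u = 0 \<and> odd n then rot_rev n u else rot_std n u)"

definition mobius_del_rot :: "nat \<Rightarrow> nat \<Rightarrow> nat \<Rightarrow> nat" where
  "mobius_del_rot n u v = (if rot_std n u v = 0 then rot_std n u 0 else rot_std n u v)"

(* The ladder has the lower rail 0, ..., n - 1 (s = True) and the upper rail n, ..., 2n - 1;
   the rung at x joins x and x + n, and the twisted edges join n - 1 to n and 2n - 1 to 0.
   The darts (nxt n v, v) that run backwards along the cycle are not parametrised here. *)
definition rail_vertex :: "nat \<Rightarrow> bool \<Rightarrow> nat \<Rightarrow> nat" where
  "rail_vertex n s x = (if s then x else x + n)"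

definition rail_dart :: "nat \<Rightarrow> bool \<Rightarrow> nat \<Rightarrow> nat \<times> nat" where
  "rail_dart n s x = (rail_vertex n s x, nxt n (rail_vertex n s x))"

definition rung_dart :: "nat \<Rightarrow> bool \<Rightarrow> nat \<Rightarrow> nat \<times> nat" where
  "rung_dart n s x = (rail_vertex n s x, rail_vertex n (\<not> s) x)"

definition ladder_rotate :: "nat \<Rightarrow> nat \<Rightarrow> nat" where
  "ladder_rotate n i = (if i < 2 * n then nxt n i else i)"

lemma ladder_walk_rail:
  assumes rail: "\<And>s x. lo \<le> x \<Longrightarrow> x < hi \<Longrightarrow> f (rail_dart n s x) = rung_dart n s (Suc x)"
    and rung: "\<And>s x. lo < x \<Longrightarrow> x < hi \<Longrightarrow> f (rung_dart n s x) = rail_dart n (\<not> s) x"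
    and "lo \<le> x" "x < hi"
  shows "rail_dart n s x \<in> forward_orbit f (rail_dart n (s = even (x - lo)) lo)"
  using assms(3,4)
proof (induction x arbitrary: s rule: dec_induct)
  case (step y)
  have y: "lo \<le> y" "y < hi"
    using step by simp_all
  have "rail_dart n (\<not> s) y \<in> forward_orbit f (rail_dart n ((\<not> s) = even (y - lo)) lo)"
    using step.IH y by simp
  then have "f (f (rail_dart n (\<not> s) y)) \<in> forward_orbit f (rail_dart n ((\<not> s) = even (y - lo)) lo)"
    by (intro forward_orbit_step)
  moreover have "f (f (rail_dart n (\<not> s) y)) = rail_dart n s (Suc y)"
    using rail[OF y] rung[of "Suc y"] step.prems y by simp
  moreover have "((\<not> s) = even (y - lo)) = (s = even (Suc y - lo))"
    using y by (auto simp: Suc_diff_le)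
  ultimately show ?case
    by simp
qed simp

lemma ladder_walk_rung:
  assumes rail: "\<And>s x. lo \<le> x \<Longrightarrow> x < hi \<Longrightarrow> f (rail_dart n s x) = rung_dart n s (Suc x)"
    and rung: "\<And>s x. lo < x \<Longrightarrow> x < hi \<Longrightarrow> f (rung_dart n s x) = rail_dart n (\<not> s) x"
    and "lo < x" "x \<le> hi"
  shows "rung_dart n s x \<in> forward_orbit f (rail_dart n (s = odd (x - lo)) lo)"
proof -
  obtain y where x: "x = Suc y" "lo \<le> y" "y < hi"
    using assms(3,4) by (cases x) auto
  have "(s = odd (x - lo)) = (s = even (y - lo))"
    using x by (auto simp: Suc_diff_le)
  then show ?thesis
    using forward_orbit_step[OF ladder_walk_rail[OF rail rung x(2,3)]] rail[OF x(2,3)] x(1)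
    by simp
qed

section \<open>The Moebius ladder\<close>

locale mobius_ladder =
  fixes n :: nat
  assumes two_le_n: "2 \<le> n"
begin

lemma nxt_lt [simp]: "u < 2 * n \<Longrightarrow> nxt n u < 2 * n"
  and prv_lt [simp]: "u < 2 * n \<Longrightarrow> prv n u < 2 * n"
  and rung_lt [simp]: "u < 2 * n \<Longrightarrow> rung n u < 2 * n"
  and prv_nxt [simp]: "u < 2 * n \<Longrightarrow> prv n (nxt n u) = u"
  and nxt_prv [simp]: "u < 2 * n \<Longrightarrow> nxt n (prv n u) = u"
  and rung_rung [simp]: "u < 2 * n \<Longrightarrow> rung n (rung n u) = u"
  using two_le_n by (auto simp: nxt_def prv_def rung_def)

lemma nxt_eq_Suc: "Suc u < 2 * n \<Longrightarrow> nxt n u = Suc u"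
  and prv_eq_diff: "0 < u \<Longrightarrow> prv n u = u - 1"
  and rung_eq_add: "u < n \<Longrightarrow> rung n u = u + n"
  and rung_eq_diff: "n \<le> u \<Longrightarrow> rung n u = u - n"
  and nxt_last: "u = 2 * n - 1 \<Longrightarrow> nxt n u = 0"
  and prv_0: "prv n 0 = 2 * n - 1"
  by (auto simp: nxt_def prv_def rung_def)

lemmas ladder_evals = nxt_eq_Suc prv_eq_diff rung_eq_add rung_eq_diff nxt_last prv_0 mult_2

lemma neighbours_distinct [simp]:
  assumes "u < 2 * n"
  shows "nxt n u \<noteq> u" "prv n u \<noteq> u" "rung n u \<noteq> u"
    "u \<noteq> nxt n u" "u \<noteq> prv n u" "u \<noteq> rung n u"
    "nxt n u \<noteq> prv n u" "nxt n u \<noteq> rung n u" "prv n u \<noteq> rung n u"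
    "prv n u \<noteq> nxt n u" "rung n u \<noteq> nxt n u" "rung n u \<noteq> prv n u"
  using assms two_le_n by (auto simp: nxt_def prv_def rung_def)

lemma neighbours_zero:
  assumes "u < 2 * n"
  shows "prv n u = 0 \<Longrightarrow> 0 < rung n u \<and> 0 < nxt n u"
    "rung n u = 0 \<Longrightarrow> 0 < prv n u \<and> 0 < nxt n u"
    "nxt n u = 0 \<Longrightarrow> 0 < prv n u \<and> 0 < rung n u"
  using neighbours_distinct[OF assms] by (metis gr0I)+

lemma rot_std_prv [simp]: "u < 2 * n \<Longrightarrow> rot_std n u (prv n u) = rung n u"
  and rot_std_rung [simp]: "u < 2 * n \<Longrightarrow> rot_std n u (rung n u) = nxt n u"
  and rot_std_nxt [simp]: "u < 2 * n \<Longrightarrow> rot_std n u (nxt n u) = prv n u"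
  and rot_rev_nxt [simp]: "u < 2 * n \<Longrightarrow> rot_rev n u (nxt n u) = rung n u"
  and rot_rev_rung [simp]: "u < 2 * n \<Longrightarrow> rot_rev n u (rung n u) = prv n u"
  and rot_rev_prv [simp]: "u < 2 * n \<Longrightarrow> rot_rev n u (prv n u) = nxt n u"
  using neighbours_distinct[of u] by (auto simp: rot_std_def rot_rev_def)

lemma rot_std_0:
  assumes "u < 2 * n"
  shows "prv n u = 0 \<Longrightarrow> rot_std n u 0 = rung n u"
    "rung n u = 0 \<Longrightarrow> rot_std n u 0 = nxt n u"
    "nxt n u = 0 \<Longrightarrow> rot_std n u 0 = prv n u"
  using assms by (metis rot_std_prv rot_std_rung rot_std_nxt)+

lemma mobius_E_eq:
  "mobius_E n = (\<lambda>u. {u, nxt n u}) ` {..<2 * n} \<union> (\<lambda>u. {u, rung n u}) ` {..<n}"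
proof -
  have "Suc i mod (2 * n) = nxt n i" if "i < 2 * n" for i
    using that by (cases "i = 2 * n - 1") (auto simp: nxt_def)
  then have "{{i, Suc i mod (2 * n)} | i. i < 2 * n} = (\<lambda>u. {u, nxt n u}) ` {..<2 * n}"
    by force
  moreover have "{{i, i + n} | i. i < n} = (\<lambda>u. {u, rung n u}) ` {..<n}"
    by (force simp: rung_def)
  ultimately show ?thesis
    by (simp add: mobius_E_def)
qed

lemma neighbour_edge_in_mobius_E:
  assumes u: "u < 2 * n" and w: "w = nxt n u \<or> w = prv n u \<or> w = rung n u"
  shows "{u, w} \<in> mobius_E n"
proof -
  have cycle: "{i, nxt n i} \<in> mobius_E n" if "i < 2 * n" for i
    using that unfolding mobius_E_eq by blast
  have rung: "{i, rung n i} \<in> mobius_E n" if "i < n" for i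
    using that unfolding mobius_E_eq by blast
  consider "w = nxt n u" | "w = prv n u" | "w = rung n u" "u < n" | "w = rung n u" "n \<le> u"
    using w by force
  then show ?thesis
  proof cases
    case 2
    then have "{u, w} = {prv n u, nxt n (prv n u)}"
      using u by (simp add: insert_commute)
    then show ?thesis
      using u cycle[of "prv n u"] by simp
  next
    case 4
    then have "{u, w} = {u - n, rung n (u - n)}"
      using u by (auto simp: rung_def)
    moreover have "u - n < n"
      using u by linarith
    ultimately show ?thesis
      using rung by simp
  qed (use u cycle rung in auto)
qed

lemma adj_mobius_iff:
  "adj (mobius_E n) u w \<longleftrightarrow> u < 2 * n \<and> (w = nxt n u \<or> w = prv n u \<or> w = rung n u)"
proof
  assume "adj (mobius_E n) u w"
  then have "u \<noteq> w" "{u, w} \<in> mobius_E n"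
    by (auto simp: adj_def)
  then consider (cycle) i where "i < 2 * n" "{u, w} = {i, nxt n i}"
    | (rung) i where "i < n" "{u, w} = {i, rung n i}"
    unfolding mobius_E_eq by blast
  then show "u < 2 * n \<and> (w = nxt n u \<or> w = prv n u \<or> w = rung n u)"
  proof cases
    case cycle
    then show ?thesis
      by (auto simp: doubleton_eq_iff)
  next
    case rung
    then have "i < 2 * n"
      by simp
    with rung show ?thesis
      by (auto simp: doubleton_eq_iff)
  qed
next
  assume u: "u < 2 * n \<and> (w = nxt n u \<or> w = prv n u \<or> w = rung n u)"
  then have "u \<noteq> w"
    using neighbours_distinct(1-3)[of u] by metis
  with u show "adj (mobius_E n) u w"
    by (simp add: adj_def neighbour_edge_in_mobius_E)
qed

lemma simple_graph_mobius: "simple_graph (mobius_V n) (mobius_E n)"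
proof -
  have "e \<subseteq> mobius_V n \<and> card e = 2" if "e \<in> mobius_E n" for e
  proof -
    consider (cycle) u where "u < 2 * n" "e = {u, nxt n u}"
      | (rung) u where "u < n" "e = {u, rung n u}"
      using \<open>e \<in> mobius_E n\<close> unfolding mobius_E_eq by blast
    then show ?thesis
    proof cases
      case rung
      then show ?thesis
        using two_le_n by (auto simp: mobius_V_def rung_def)
    qed (auto simp: mobius_V_def)
  qed
  then show ?thesis
    by (simp add: simple_graph_def mobius_V_def)
qed

lemma card_mobius_E: "card (mobius_E n) = 3 * n"
proof -
  have "inj_on (\<lambda>u. {u, nxt n u}) {..<2 * n}"
  proof (rule inj_onI)
    fix u v assume "u \<in> {..<2 * n}" "v \<in> {..<2 * n}" "{u, nxt n u} = {v, nxt n v}"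
    then show "u = v"
      using two_le_n by (auto simp: doubleton_eq_iff nxt_def split: if_splits)
  qed
  moreover have "inj_on (\<lambda>u. {u, rung n u}) {..<n}"
    by (auto intro!: inj_onI simp: doubleton_eq_iff rung_def)
  moreover have "(\<lambda>u. {u, nxt n u}) ` {..<2 * n} \<inter> (\<lambda>u. {u, rung n u}) ` {..<n} = {}"
    using two_le_n by (auto simp: doubleton_eq_iff nxt_def rung_def split: if_splits)
  ultimately show ?thesis
    unfolding mobius_E_eq by (simp add: card_Un_disjoint card_image)
qed

lemma cycle_rank_mobius: "cycle_rank (mobius_V n) (mobius_E n) = int n + 1"
  by (simp add: cycle_rank_def card_mobius_E mobius_V_def)

lemma cycle_rank_mobius_del:
  "cycle_rank (del_vertex_V (mobius_V n) 0) (del_vertex_E (mobius_E n) 0) = int n - 1"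
proof -
  have "{w. adj (mobius_E n) 0 w} = {nxt n 0, prv n 0, rung n 0}"
    using two_le_n by (auto simp: adj_mobius_iff)
  then have "card {w. adj (mobius_E n) 0 w} = 3"
    using two_le_n by simp
  moreover have "0 \<in> mobius_V n"
    using two_le_n by (simp add: mobius_V_def)
  ultimately show ?thesis
    by (simp add: cycle_rank_del_vertex[OF simple_graph_mobius] cycle_rank_mobius)
qed

lemma finite_darts_mobius: "finite (darts (mobius_E n))"
proof -
  have "darts (mobius_E n) \<subseteq> {..<2 * n} \<times> {..<2 * n}"
    by (auto simp: darts_def adj_mobius_iff)
  then show ?thesis
    by (rule finite_subset) simp
qed

lemma rotation_system_mobius:
  "rotation_system (mobius_E n) (rotation_of (mobius_E n) (mobius_rot n))"
proof (rule rotation_system_rotation_of[OF finite_darts_mobius])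
  fix u v assume "adj (mobius_E n) u v"
  then show "adj (mobius_E n) u (mobius_rot n u v)"
    by (auto simp: adj_mobius_iff mobius_rot_def)
next
  fix u v w assume "adj (mobius_E n) u v" "adj (mobius_E n) u w" "mobius_rot n u v = mobius_rot n u w"
  then show "v = w"
    by (auto simp: adj_mobius_iff mobius_rot_def split: if_splits)
next
  fix u v w assume "adj (mobius_E n) u v" "adj (mobius_E n) u w"
  then have "w = v \<or> w = mobius_rot n u v \<or> w = mobius_rot n u (mobius_rot n u v)"
    by (auto simp: adj_mobius_iff mobius_rot_def)
  then show "\<exists>k. (mobius_rot n u ^^ k) v = w"
    by (rule funpow_three_cycle)
qed

lemma finite_darts_mobius_del: "finite (darts (del_vertex_E (mobius_E n) 0))"
  by (rule finite_subset[OF _ finite_darts_mobius]) (auto simp: darts_def adj_del_vertex_E)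

lemma rotation_system_mobius_del:
  "rotation_system (del_vertex_E (mobius_E n) 0) (rotation_of (del_vertex_E (mobius_E n) 0) (mobius_del_rot n))"
proof (rule rotation_system_rotation_of[OF finite_darts_mobius_del])
  fix u v assume "adj (del_vertex_E (mobius_E n) 0) u v"
  then show "adj (del_vertex_E (mobius_E n) 0) u (mobius_del_rot n u v)"
    using neighbours_distinct[of u] neighbours_zero[of u]
    by (auto simp: adj_del_vertex_E adj_mobius_iff mobius_del_rot_def rot_std_0)
next
  fix u v w assume "adj (del_vertex_E (mobius_E n) 0) u v" "adj (del_vertex_E (mobius_E n) 0) u w"
    "mobius_del_rot n u v = mobius_del_rot n u w"
  then show "v = w"
    using neighbours_distinct[of u] neighbours_zero[of u]
    by (auto simp: adj_del_vertex_E adj_mobius_iff mobius_del_rot_def rot_std_0 split: if_splits)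
next
  fix u v w assume "adj (del_vertex_E (mobius_E n) 0) u v" "adj (del_vertex_E (mobius_E n) 0) u w"
  then have "w = v \<or> w = mobius_del_rot n u v \<or> w = mobius_del_rot n u (mobius_del_rot n u v)"
    using neighbours_distinct[of u] neighbours_zero[of u]
    by (auto simp: adj_del_vertex_E adj_mobius_iff mobius_del_rot_def rot_std_0)
  then show "\<exists>k. (mobius_del_rot n u ^^ k) v = w"
    by (rule funpow_three_cycle)
qed

lemma in_darts_mobius_del_iff:
  "(u, w) \<in> darts (del_vertex_E (mobius_E n) 0) \<longleftrightarrow> adj (mobius_E n) u w \<and> u \<noteq> 0 \<and> w \<noteq> 0"
  by (simp add: darts_def adj_del_vertex_E)

abbreviation face_M :: "nat \<times> nat \<Rightarrow> nat \<times> nat" where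
  "face_M \<equiv> face_perm (rotation_of (mobius_E n) (mobius_rot n))"

abbreviation face_D :: "nat \<times> nat \<Rightarrow> nat \<times> nat" where
  "face_D \<equiv> face_perm (rotation_of (del_vertex_E (mobius_E n) 0) (mobius_del_rot n))"

lemma rail_vertex_lt [simp]: "x < n \<Longrightarrow> rail_vertex n s x < 2 * n"
  and rail_vertex_eq_0 [simp]: "rail_vertex n s x = 0 \<longleftrightarrow> s \<and> x = 0"
  and nxt_rail_vertex [simp]: "Suc x < n \<Longrightarrow> nxt n (rail_vertex n s x) = rail_vertex n s (Suc x)"
  and prv_rail_vertex [simp]: "Suc x < n \<Longrightarrow> prv n (rail_vertex n s (Suc x)) = rail_vertex n s x"
  and rung_rail_vertex [simp]: "x < n \<Longrightarrow> rung n (rail_vertex n s x) = rail_vertex n (\<not> s) x"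
  using two_le_n by (auto simp: rail_vertex_def nxt_def prv_def rung_def)

lemma face_M_eq: "adj (mobius_E n) a b \<Longrightarrow> face_M (a, b) = (b, mobius_rot n b a)"
  by (rule face_perm_rotation_of)

lemma face_D_eq:
  "adj (mobius_E n) a b \<Longrightarrow> a \<noteq> 0 \<Longrightarrow> b \<noteq> 0 \<Longrightarrow> face_D (a, b) = (b, mobius_del_rot n b a)"
  by (simp add: face_perm_rotation_of adj_del_vertex_E)

lemma face_M_std:
  assumes "b < 2 * n" "b \<noteq> 0 \<or> even n"
  shows "face_M (prv n b, b) = (b, rung n b)"
    "face_M (rung n b, b) = (b, nxt n b)"
    "face_M (nxt n b, b) = (b, prv n b)"
  using assms by (auto simp: face_M_eq adj_mobius_iff mobius_rot_def)

lemma face_M_twisted: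
  assumes "odd n"
  shows "face_M (prv n 0, 0) = (0, nxt n 0)"
    "face_M (rung n 0, 0) = (0, prv n 0)"
    "face_M (nxt n 0, 0) = (0, rung n 0)"
  using assms two_le_n by (auto simp: face_M_eq adj_mobius_iff mobius_rot_def)

lemma face_D_std:
  assumes "b < 2 * n" "b \<noteq> 0"
  shows "prv n b \<noteq> 0 \<Longrightarrow> rung n b \<noteq> 0 \<Longrightarrow> face_D (prv n b, b) = (b, rung n b)"
    "rung n b \<noteq> 0 \<Longrightarrow> nxt n b \<noteq> 0 \<Longrightarrow> face_D (rung n b, b) = (b, nxt n b)"
    "nxt n b \<noteq> 0 \<Longrightarrow> prv n b \<noteq> 0 \<Longrightarrow> face_D (nxt n b, b) = (b, prv n b)"
  using assms by (auto simp: face_D_eq adj_mobius_iff mobius_del_rot_def)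

lemma face_D_skip:
  assumes "b < 2 * n" "b \<noteq> 0"
  shows "prv n b \<noteq> 0 \<Longrightarrow> rung n b = 0 \<Longrightarrow> face_D (prv n b, b) = (b, nxt n b)"
    "rung n b \<noteq> 0 \<Longrightarrow> nxt n b = 0 \<Longrightarrow> face_D (rung n b, b) = (b, prv n b)"
    "nxt n b \<noteq> 0 \<Longrightarrow> prv n b = 0 \<Longrightarrow> face_D (nxt n b, b) = (b, rung n b)"
  using assms by (auto simp: face_D_eq adj_mobius_iff mobius_del_rot_def rot_std_0)

lemma face_M_rail: "Suc x < n \<Longrightarrow> face_M (rail_dart n s x) = rung_dart n s (Suc x)"
  using face_M_std(1)[of "rail_vertex n s (Suc x)"] by (simp add: rail_dart_def rung_dart_def)

lemma face_M_rung:
  "0 < x \<Longrightarrow> x < n \<Longrightarrow> face_M (rung_dart n s x) = rail_dart n (\<not> s) x"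
  using face_M_std(2)[of "rail_vertex n (\<not> s) x"] by (simp add: rail_dart_def rung_dart_def)

lemma face_M_reversed:
  "0 < v \<Longrightarrow> v < 2 * n \<Longrightarrow> face_M (nxt n v, v) = (nxt n (v - 1), v - 1)"
  using face_M_std(3)[of v] two_le_n by (simp add: prv_def nxt_def)

lemma face_D_rail:
  "0 < x \<Longrightarrow> Suc x < n \<Longrightarrow> face_D (rail_dart n s x) = rung_dart n s (Suc x)"
  using face_D_std(1)[of "rail_vertex n s (Suc x)"] by (simp add: rail_dart_def rung_dart_def)

lemma face_D_rung:
  "0 < x \<Longrightarrow> Suc x < n \<Longrightarrow> face_D (rung_dart n s x) = rail_dart n (\<not> s) x"
  using face_D_std(2)[of "rail_vertex n (\<not> s) x"] by (simp add: rail_dart_def rung_dart_def)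

lemma face_D_reversed:
  "1 < v \<Longrightarrow> v < 2 * n - 1 \<Longrightarrow> face_D (nxt n v, v) = (nxt n (v - 1), v - 1)"
  using face_D_std(3)[of v] two_le_n by (simp add: prv_def nxt_def)

lemma mobius_dart_cases:
  assumes "adj (mobius_E n) u w"
  obtains (rail) s x where "x < n" "(u, w) = rail_dart n s x"
    | (rung) s x where "x < n" "(u, w) = rung_dart n s x"
    | (reversed) v where "v < 2 * n" "(u, w) = (nxt n v, v)"
proof -
  have u: "u < 2 * n" "w = nxt n u \<or> w = prv n u \<or> w = rung n u"
    using assms by (simp_all add: adj_mobius_iff)
  define s where "s = (u < n)"
  define x where "x = (if u < n then u else u - n)"
  have x: "x < n" "u = rail_vertex n s x"
    using u by (auto simp: s_def x_def rail_vertex_def)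
  consider "w = nxt n u" | "w = prv n u" | "w = rung n u"
    using u by blast
  then show thesis
  proof cases
    case 1
    then show thesis
      using x by (intro rail[of x s]) (simp_all add: rail_dart_def)
  next
    case 2
    then show thesis
      using u by (intro reversed[of "prv n u"]) simp_all
  next
    case 3
    then show thesis
      using x by (intro rung[of x s]) (simp_all add: rung_dart_def)
  qed
qed

lemma face_M_walk_rail:
  "x < n - 1 \<Longrightarrow> rail_dart n s x \<in> forward_orbit face_M (rail_dart n (s = even x) 0)"
  using ladder_walk_rail[where lo = 0 and hi = "n - 1" and f = face_M, OF face_M_rail face_M_rung]
  by simp

lemma face_M_walk_rung:
  "0 < x \<Longrightarrow> x \<le> n - 1 \<Longrightarrow> rung_dart n s x \<in> forward_orbit face_M (rail_dart n (s = odd x) 0)"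
  using ladder_walk_rung[where lo = 0 and hi = "n - 1" and f = face_M, OF face_M_rail face_M_rung]
  by simp

lemma face_M_rail_last: "face_M (rail_dart n True (n - 1)) = rung_dart n False 0"
  using face_M_std(1)[of n] two_le_n
  by (simp add: rail_dart_def rung_dart_def rail_vertex_def ladder_evals)

lemma face_M_rung_first: "face_M (rung_dart n True 0) = rail_dart n False 0"
  using face_M_std(2)[of n] two_le_n
  by (simp add: rail_dart_def rung_dart_def rail_vertex_def ladder_evals)

lemma face_M_rail_wrap_even: "even n \<Longrightarrow> face_M (rail_dart n False (n - 1)) = rung_dart n True 0"
  using face_M_std(1)[of 0] two_le_n
  by (simp add: rail_dart_def rung_dart_def rail_vertex_def ladder_evals)

lemma face_M_rung_twisted: "odd n \<Longrightarrow> face_M (rung_dart n False 0) = (nxt n (2 * n - 1), 2 * n - 1)"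
  using face_M_twisted(2) two_le_n
  by (simp add: rung_dart_def rail_vertex_def ladder_evals)

lemma face_M_reversed_twisted: "odd n \<Longrightarrow> face_M (nxt n 0, 0) = rung_dart n True 0"
  using face_M_twisted(3) two_le_n
  by (simp add: rung_dart_def rail_vertex_def ladder_evals)

lemma face_M_cover_rail:
  assumes "x < n"
  shows "rail_dart n s x \<in> forward_orbit face_M (rail_dart n True 0) \<union> forward_orbit face_M (rail_dart n False 0)"
proof -
  obtain t where "rail_dart n s x \<in> forward_orbit face_M (rail_dart n t 0)"
  proof (cases "x < n - 1")
    case True
    then show thesis
      using face_M_walk_rail that by blast
  next
    case False
    then have x: "0 < x" "x = n - 1"
      using assms two_le_n by simp_all
    have "face_M (rung_dart n (\<not> s) x) \<in> forward_orbit face_M (rail_dart n ((\<not> s) = odd x) 0)"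
      by (rule forward_orbit_step[OF face_M_walk_rung[OF x(1) eq_imp_le[OF x(2)]]])
    moreover have "face_M (rung_dart n (\<not> s) x) = rail_dart n s x"
      using face_M_rung[of x "\<not> s"] x assms by simp
    ultimately show thesis
      using that by simp
  qed
  then show ?thesis
    by (cases t) auto
qed

lemma face_M_cover_rung:
  assumes "x < n"
  shows "rung_dart n s x \<in> forward_orbit face_M (rail_dart n True 0) \<union> forward_orbit face_M (rail_dart n False 0)"
proof -
  consider "0 < x" | "x = 0" "s" | "x = 0" "\<not> s"
    by blast
  then show ?thesis
  proof cases
    case 1
    have "rung_dart n s x \<in> forward_orbit face_M (rail_dart n (s = odd x) 0)"
      by (rule face_M_walk_rung[OF 1]) (use assms in simp)
    then show ?thesis
      by (cases "s = odd x") simp_all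
  next
    case 2
    have "rung_dart n True 0 \<in> darts (mobius_E n)"
      using two_le_n by (simp add: darts_def adj_mobius_iff rung_dart_def rail_vertex_def rung_eq_add)
    moreover have "rail_dart n False 0 \<in> forward_orbit face_M (rung_dart n True 0)"
      using face_M_rung_first by (simp add: forward_orbit_stepI)
    ultimately show ?thesis
      using face_perm_orbit_sym[OF rotation_system_mobius finite_darts_mobius] 2 by simp
  next
    case 3
    have "face_M (rail_dart n True (n - 1)) \<in> forward_orbit face_M (rail_dart n True 0)
        \<union> forward_orbit face_M (rail_dart n False 0)"
      using face_M_cover_rail[of "n - 1" True] two_le_n by (auto intro: forward_orbit_step)
    then show ?thesis
      using face_M_rail_last 3 by simp
  qed
qed

lemma face_M_cover_reversed:
  assumes "v < 2 * n"
  shows "(nxt n v, v) \<in> forward_orbit face_M (nxt n 0, 0)"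
proof -
  have "(nxt n v, v) \<in> darts (mobius_E n)"
    using assms by (simp add: darts_def adj_mobius_iff)
  moreover have "(nxt n 0, 0) \<in> forward_orbit face_M (nxt n v, v)"
    using forward_orbit_descending[where g = "\<lambda>v. (nxt n v, v)" and lo = 0 and hi = v,
        OF face_M_reversed] assms by simp
  ultimately show ?thesis
    using face_perm_orbit_sym[OF rotation_system_mobius finite_darts_mobius] by blast
qed

lemma face_M_cover:
  assumes "d \<in> darts (mobius_E n)"
  shows "d \<in> forward_orbit face_M (rail_dart n True 0) \<union> forward_orbit face_M (rail_dart n False 0)
    \<union> forward_orbit face_M (nxt n 0, 0)"
proof -
  obtain u w where uw: "d = (u, w)" "adj (mobius_E n) u w"
    using assms by (auto simp: darts_def)
  from uw(2) show ?thesis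
    by (cases rule: mobius_dart_cases)
      (use uw(1) face_M_cover_rail face_M_cover_rung face_M_cover_reversed in auto)
qed

lemma rail_dart_0_in_darts_mobius: "rail_dart n s 0 \<in> darts (mobius_E n)"
  and reversed_dart_0_in_darts_mobius: "(nxt n 0, 0) \<in> darts (mobius_E n)"
  using two_le_n by (auto simp: darts_def adj_mobius_iff rail_dart_def rail_vertex_def)

lemma face_M_one_rail_face_even:
  assumes "even n"
  shows "rail_dart n False 0 \<in> forward_orbit face_M (rail_dart n True 0)"
proof -
  have "rung_dart n True (n - 1) \<in> forward_orbit face_M (rail_dart n True 0)"
    using face_M_walk_rung[of "n - 1" True] two_le_n assms by simp
  then have "rail_dart n False (n - 1) \<in> forward_orbit face_M (rail_dart n True 0)"
    by (rule forward_orbit_step_eq) (use face_M_rung two_le_n in simp)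
  then have "rung_dart n True 0 \<in> forward_orbit face_M (rail_dart n True 0)"
    by (rule forward_orbit_step_eq) (use face_M_rail_wrap_even assms in simp)
  then show ?thesis
    by (rule forward_orbit_step_eq) (rule face_M_rung_first)
qed

lemma face_M_one_face_odd:
  assumes "odd n"
  shows "(nxt n 0, 0) \<in> forward_orbit face_M (rail_dart n True 0)"
    "rail_dart n False 0 \<in> forward_orbit face_M (rail_dart n True 0)"
proof -
  have "rung_dart n False (n - 1) \<in> forward_orbit face_M (rail_dart n True 0)"
    using face_M_walk_rung[of "n - 1" False] two_le_n assms by simp
  then have "rail_dart n True (n - 1) \<in> forward_orbit face_M (rail_dart n True 0)"
    by (rule forward_orbit_step_eq) (use face_M_rung two_le_n in simp)
  then have "rung_dart n False 0 \<in> forward_orbit face_M (rail_dart n True 0)"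
    by (rule forward_orbit_step_eq) (rule face_M_rail_last)
  then have "(nxt n (2 * n - 1), 2 * n - 1) \<in> forward_orbit face_M (rail_dart n True 0)"
    by (rule forward_orbit_step_eq) (use face_M_rung_twisted assms in simp)
  moreover have "(nxt n 0, 0) \<in> forward_orbit face_M (nxt n (2 * n - 1), 2 * n - 1)"
    using forward_orbit_descending[where g = "\<lambda>v. (nxt n v, v)" and lo = 0 and hi = "2 * n - 1",
        OF face_M_reversed] by simp
  ultimately show reversed_0: "(nxt n 0, 0) \<in> forward_orbit face_M (rail_dart n True 0)"
    by (rule forward_orbit_trans)
  then have "rung_dart n True 0 \<in> forward_orbit face_M (rail_dart n True 0)"
    by (rule forward_orbit_step_eq) (use face_M_reversed_twisted assms in simp)
  then show "rail_dart n False 0 \<in> forward_orbit face_M (rail_dart n True 0)"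
    by (rule forward_orbit_step_eq) (rule face_M_rung_first)
qed

(* For even n the rail and rung darts form one face and the backward cycle the other; for odd n
   the twist at vertex 0 joins them into a single face. *)
lemma card_faces_mobius:
  "card (faces (mobius_E n) (rotation_of (mobius_E n) (mobius_rot n))) \<le> (if even n then 2 else 1)"
proof (cases "even n")
  case True
  then have "card (faces (mobius_E n) (rotation_of (mobius_E n) (mobius_rot n)))
      \<le> card {rail_dart n True 0, (nxt n 0, 0)}"
    using face_M_cover face_M_one_rail_face_even
    by (intro card_faces_le[OF rotation_system_mobius finite_darts_mobius])
      (auto simp: rail_dart_0_in_darts_mobius reversed_dart_0_in_darts_mobius intro: forward_orbit_trans)
  also have "\<dots> \<le> 2"
    by (simp add: card_insert_if)
  finally show ?thesis
    using True by simp
next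
  case False
  then have "card (faces (mobius_E n) (rotation_of (mobius_E n) (mobius_rot n)))
      \<le> card {rail_dart n True 0}"
    using face_M_cover face_M_one_face_odd
    by (intro card_faces_le[OF rotation_system_mobius finite_darts_mobius])
      (auto simp: rail_dart_0_in_darts_mobius intro: forward_orbit_trans)
  then show ?thesis
    using False by simp
qed

lemma face_D_walk_rail:
  assumes "0 < x" "x < n - 1"
  shows "rail_dart n s x \<in> forward_orbit face_D (rail_dart n (s = even (x - 1)) 1)"
proof (rule ladder_walk_rail[where lo = 1 and hi = "n - 1"])
  show "face_D (rail_dart n t y) = rung_dart n t (Suc y)" if "1 \<le> y" "y < n - 1" for t y
    using that by (simp add: face_D_rail)
  show "face_D (rung_dart n t y) = rail_dart n (\<not> t) y" if "1 < y" "y < n - 1" for t y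
    using that by (simp add: face_D_rung)
qed (use assms in simp_all)

lemma face_D_walk_rung:
  assumes "1 < x" "x \<le> n - 1"
  shows "rung_dart n s x \<in> forward_orbit face_D (rail_dart n (s = odd (x - 1)) 1)"
proof (rule ladder_walk_rung[where lo = 1 and hi = "n - 1"])
  show "face_D (rail_dart n t y) = rung_dart n t (Suc y)" if "1 \<le> y" "y < n - 1" for t y
    using that by (simp add: face_D_rail)
  show "face_D (rung_dart n t y) = rail_dart n (\<not> t) y" if "1 < y" "y < n - 1" for t y
    using that by (simp add: face_D_rung)
qed (use assms in simp_all)

lemma face_D_rail_last: "face_D (rail_dart n True (n - 1)) = rail_dart n False 0"
  using face_D_skip(1)[of n] two_le_n
  by (simp add: rail_dart_def rail_vertex_def ladder_evals)

lemma face_D_rail_first_upper: "face_D (rail_dart n False 0) = rung_dart n False 1"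
  using face_D_std(1)[of "Suc n"] two_le_n
  by (simp add: rail_dart_def rung_dart_def rail_vertex_def ladder_evals)

lemma face_D_rung_first_down: "face_D (rung_dart n False 1) = rail_dart n True 1"
  using face_D_std(2)[of 1] two_le_n
  by (simp add: rail_dart_def rung_dart_def rail_vertex_def ladder_evals)

lemma face_D_rung_last_up: "face_D (rung_dart n True (n - 1)) = (nxt n (2 * n - 2), 2 * n - 2)"
  using face_D_skip(2)[of "2 * n - 1"] two_le_n
  by (auto simp: rung_dart_def rail_vertex_def ladder_evals)

lemma face_D_reversed_1: "face_D (nxt n 1, 1) = rung_dart n True 1"
  using face_D_skip(3)[of 1] two_le_n
  by (simp add: rung_dart_def rail_vertex_def ladder_evals)

lemma face_D_reversed_reaches:
  assumes "1 \<le> v" "v \<le> 2 * n - 2"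
  shows "rung_dart n True 1 \<in> forward_orbit face_D (nxt n v, v)"
proof -
  have "(nxt n 1, 1) \<in> forward_orbit face_D (nxt n v, v)"
    using forward_orbit_descending[where g = "\<lambda>v. (nxt n v, v)" and lo = 1 and hi = v,
        OF face_D_reversed] assms
    by simp
  then show ?thesis
    by (rule forward_orbit_step_eq) (rule face_D_reversed_1)
qed

lemma face_D_reaches_rail_1:
  "rail_dart n True 1 \<in> forward_orbit face_D (rung_dart n False 1)"
  "rail_dart n True 1 \<in> forward_orbit face_D (rail_dart n False 0)"
  "rail_dart n True 1 \<in> forward_orbit face_D (rail_dart n True (n - 1))"
proof -
  show rung: "rail_dart n True 1 \<in> forward_orbit face_D (rung_dart n False 1)"
    by (rule forward_orbit_stepI[where f = face_D, OF face_D_rung_first_down]) simp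
  show rail_0: "rail_dart n True 1 \<in> forward_orbit face_D (rail_dart n False 0)"
    by (rule forward_orbit_stepI[where f = face_D, OF face_D_rail_first_upper rung])
  show "rail_dart n True 1 \<in> forward_orbit face_D (rail_dart n True (n - 1))"
    by (rule forward_orbit_stepI[where f = face_D, OF face_D_rail_last rail_0])
qed

lemma face_D_cover_walk:
  assumes "2 < n" "d \<in> forward_orbit face_D (rail_dart n t 1)"
  shows "d \<in> forward_orbit face_D (rail_dart n True 1) \<union> forward_orbit face_D (rung_dart n True 1)"
proof (cases t)
  case False
  have "rail_dart n False 1 \<in> forward_orbit face_D (rung_dart n True 1)"
    using face_D_rung[of 1 True] assms(1) by (simp add: forward_orbit_stepI)
  then show ?thesis
    using forward_orbit_trans[of "rail_dart n False 1"] assms(2) False by simp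
qed (use assms in simp)

lemma face_D_cover:
  assumes d: "d \<in> darts (del_vertex_E (mobius_E n) 0)"
  shows "d \<in> forward_orbit face_D (rail_dart n True 1) \<union> forward_orbit face_D (rung_dart n True 1)"
proof -
  note orbit_sym = face_perm_orbit_sym[OF rotation_system_mobius_del finite_darts_mobius_del d]
  obtain u w where uw: "d = (u, w)" "adj (mobius_E n) u w" "u \<noteq> 0" "w \<noteq> 0"
    using d by (cases d) (simp add: in_darts_mobius_del_iff)
  from uw(2) show ?thesis
  proof (cases rule: mobius_dart_cases)
    case (rail s x)
    consider "0 < x" "x < n - 1" | "x = 0" "\<not> s" | "x = n - 1" "s"
      using rail uw(3,4) two_le_n
      by (cases s; cases "x = 0"; cases "x = n - 1")
        (auto simp: rail_dart_def rail_vertex_def ladder_evals)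
    then show ?thesis
    proof cases
      case 1
      then show ?thesis
        using face_D_cover_walk[OF _ face_D_walk_rail[OF 1]] rail(2) uw(1) by simp
    qed (use rail(2) uw(1) face_D_reaches_rail_1 orbit_sym in auto)
  next
    case (rung s x)
    have "0 < x"
      using rung uw(3,4) by (cases s) (auto simp: rung_dart_def rail_vertex_def)
    then consider "1 < x" | "x = 1" "s" | "x = 1" "\<not> s"
      by (cases "x = 1"; cases s) auto
    then show ?thesis
    proof cases
      case 1
      then show ?thesis
        using face_D_cover_walk[OF _ face_D_walk_rung[OF 1]] rung uw(1) by simp
    qed (use rung(2) uw(1) face_D_reaches_rail_1 orbit_sym in auto)
  next
    case (reversed v)
    then have "1 \<le> v" "v \<le> 2 * n - 2"
      using uw(3,4) by (auto simp: nxt_def split: if_splits)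
    then show ?thesis
      using face_D_reversed_reaches orbit_sym reversed(2) uw(1) by simp
  qed
qed

lemma darts_at_1_in_darts_mobius_del:
  "rail_dart n True 1 \<in> darts (del_vertex_E (mobius_E n) 0)"
  "rung_dart n True 1 \<in> darts (del_vertex_E (mobius_E n) 0)"
  using two_le_n by (auto simp: in_darts_mobius_del_iff adj_mobius_iff rail_dart_def rung_dart_def
      rail_vertex_def nxt_eq_Suc rung_eq_add)

lemma card_faces_mobius_del:
  "card (faces (del_vertex_E (mobius_E n) 0) (rotation_of (del_vertex_E (mobius_E n) 0) (mobius_del_rot n)))
    \<le> (if even n then 2 else 1)"
proof (cases "even n")
  case True
  have "card (faces (del_vertex_E (mobius_E n) 0) (rotation_of (del_vertex_E (mobius_E n) 0) (mobius_del_rot n)))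
      \<le> card {rail_dart n True 1, rung_dart n True 1}"
    using face_D_cover darts_at_1_in_darts_mobius_del
    by (intro card_faces_le[OF rotation_system_mobius_del finite_darts_mobius_del]) auto
  also have "\<dots> \<le> 2"
    by (simp add: card_insert_if)
  finally show ?thesis
    using True by simp
next
  case False
  then have "3 \<le> n"
    using two_le_n by presburger
  then have "rung_dart n True (n - 1) \<in> forward_orbit face_D (rail_dart n True 1)"
    using face_D_walk_rung[of "n - 1" True] False by simp
  then have "(nxt n (2 * n - 2), 2 * n - 2) \<in> forward_orbit face_D (rail_dart n True 1)"
    by (rule forward_orbit_step_eq) (rule face_D_rung_last_up)
  then have "rung_dart n True 1 \<in> forward_orbit face_D (rail_dart n True 1)"
    using face_D_reversed_reaches[of "2 * n - 2"] two_le_n by (auto intro: forward_orbit_trans)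
  then have "card (faces (del_vertex_E (mobius_E n) 0) (rotation_of (del_vertex_E (mobius_E n) 0) (mobius_del_rot n)))
      \<le> card {rail_dart n True 1}"
    using face_D_cover darts_at_1_in_darts_mobius_del
    by (intro card_faces_le[OF rotation_system_mobius_del finite_darts_mobius_del])
      (auto intro: forward_orbit_trans)
  then show ?thesis
    using False by simp
qed

lemma max_genus_mobius: "max_genus (mobius_V n) (mobius_E n) = (int n + 1) div 2"
proof -
  have "darts (mobius_E n) \<noteq> {}"
    using rail_dart_0_in_darts_mobius by blast
  moreover have "int (card (faces (mobius_E n) (rotation_of (mobius_E n) (mobius_rot n))))
      \<le> 1 + cycle_rank (mobius_V n) (mobius_E n) mod 2"
  proof -
    have "(int n + 1) mod 2 = (if even n then 1 else 0)"
      by presburger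
    then show ?thesis
      using card_faces_mobius by (simp add: cycle_rank_mobius split: if_splits)
  qed
  ultimately show ?thesis
    using max_genus_eq_cycle_rank_div_2[OF finite_darts_mobius _ rotation_system_mobius]
    by (simp add: cycle_rank_mobius)
qed

lemma max_genus_mobius_del:
  "max_genus (del_vertex_V (mobius_V n) 0) (del_vertex_E (mobius_E n) 0) = (int n - 1) div 2"
proof -
  have "darts (del_vertex_E (mobius_E n) 0) \<noteq> {}"
    using darts_at_1_in_darts_mobius_del by blast
  moreover have "int (card (faces (del_vertex_E (mobius_E n) 0)
        (rotation_of (del_vertex_E (mobius_E n) 0) (mobius_del_rot n))))
      \<le> 1 + cycle_rank (del_vertex_V (mobius_V n) 0) (del_vertex_E (mobius_E n) 0) mod 2"
  proof -
    have "(int n - 1) mod 2 = (if even n then 1 else 0)"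
      by presburger
    then show ?thesis
      using card_faces_mobius_del by (simp add: cycle_rank_mobius_del split: if_splits)
  qed
  ultimately show ?thesis
    using max_genus_eq_cycle_rank_div_2[OF finite_darts_mobius_del _ rotation_system_mobius_del]
    by (simp add: cycle_rank_mobius_del)
qed

lemma graph_connected_mobius_del:
  "graph_connected (del_vertex_V (mobius_V n) 0) (del_vertex_E (mobius_E n) 0)"
proof -
  let ?r = "{(x, y). adj (del_vertex_E (mobius_E n) 0) x y}"
  have path_edge: "(k, Suc k) \<in> ?r \<and> (Suc k, k) \<in> ?r" if "1 \<le> k" "Suc k < 2 * n" for k
    using that by (auto simp: adj_del_vertex_E adj_mobius_iff ladder_evals)
  have path: "(1, a) \<in> ?r\<^sup>* \<and> (a, 1) \<in> ?r\<^sup>*" if "1 \<le> a" "a < 2 * n" for a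
    using that
  proof (induction a rule: dec_induct)
    case (step k)
    then have "(k, Suc k) \<in> ?r" "(Suc k, k) \<in> ?r" "(1, k) \<in> ?r\<^sup>*" "(k, 1) \<in> ?r\<^sup>*"
      using path_edge[of k] by simp_all
    then show ?case
      by (meson converse_rtrancl_into_rtrancl rtrancl.rtrancl_into_rtrancl)
  qed simp
  have V: "del_vertex_V (mobius_V n) 0 = {1..<2 * n}"
    by (auto simp: mobius_V_def del_vertex_V_def)
  show ?thesis
    unfolding graph_connected_def V
  proof (intro conjI ballI)
    fix u v assume "u \<in> {1..<2 * n}" "v \<in> {1..<2 * n}"
    then show "(u, v) \<in> ?r\<^sup>*"
      using path[of u] path[of v] by (auto intro: rtrancl_trans)
  qed (use two_le_n in simp)
qed

lemma nxt_rung: "u < 2 * n \<Longrightarrow> nxt n (rung n u) = rung n (nxt n u)"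
  using two_le_n by (auto simp: nxt_def rung_def)

lemma bij_ladder_rotate: "bij (ladder_rotate n)"
proof (rule o_bij)
  show "ladder_rotate n \<circ> (\<lambda>i. if i < 2 * n then prv n i else i) = id"
    "(\<lambda>i. if i < 2 * n then prv n i else i) \<circ> ladder_rotate n = id"
    by (auto simp: fun_eq_iff ladder_rotate_def)
qed

lemma adj_ladder_rotate:
  "adj (mobius_E n) u w \<Longrightarrow> adj (mobius_E n) (ladder_rotate n u) (ladder_rotate n w)"
  by (auto simp: adj_mobius_iff ladder_rotate_def nxt_rung)

lemma ladder_rotate_V: "ladder_rotate n ` mobius_V n = mobius_V n"
proof -
  have "ladder_rotate n ` mobius_V n \<subseteq> mobius_V n"
    by (auto simp: ladder_rotate_def mobius_V_def)
  moreover have "card (ladder_rotate n ` mobius_V n) = card (mobius_V n)"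
    using inj_on_subset[OF bij_is_inj[OF bij_ladder_rotate] subset_UNIV] by (rule card_image)
  ultimately show ?thesis
    by (simp add: card_subset_eq mobius_V_def)
qed

lemma ladder_rotate_E: "(`) (ladder_rotate n) ` mobius_E n = mobius_E n"
proof -
  have "(`) (ladder_rotate n) ` mobius_E n \<subseteq> mobius_E n"
  proof
    fix e' assume "e' \<in> (`) (ladder_rotate n) ` mobius_E n"
    then obtain e where e: "e \<in> mobius_E n" "e' = ladder_rotate n ` e"
      by blast
    then obtain u w where "e = {u, w}" "adj (mobius_E n) u w"
      using simple_graph_mobius by (auto simp: simple_graph_def adj_def card_2_iff)
    then show "e' \<in> mobius_E n"
      using e adj_ladder_rotate by (auto simp: adj_def)
  qed
  moreover have "card ((`) (ladder_rotate n) ` mobius_E n) = card (mobius_E n)"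
    using inj_on_subset[OF inj_image_of_inj[OF bij_is_inj[OF bij_ladder_rotate]] subset_UNIV]
    by (rule card_image)
  moreover have "finite (mobius_E n)"
    by (simp add: mobius_E_eq)
  ultimately show ?thesis
    by (simp add: card_subset_eq)
qed

lemma funpow_ladder_rotate_V: "(ladder_rotate n ^^ k) ` mobius_V n = mobius_V n"
proof (induction k)
  case (Suc k)
  have "(ladder_rotate n ^^ Suc k) ` mobius_V n = ladder_rotate n ` (ladder_rotate n ^^ k) ` mobius_V n"
    by (simp add: image_comp)
  then show ?case
    by (simp only: Suc.IH ladder_rotate_V)
qed simp

lemma funpow_ladder_rotate_E: "(`) (ladder_rotate n ^^ k) ` mobius_E n = mobius_E n"
proof (induction k)
  case (Suc k)
  have "(`) (ladder_rotate n ^^ Suc k) ` mobius_E n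
      = (`) (ladder_rotate n) ` (`) (ladder_rotate n ^^ k) ` mobius_E n"
    by (simp add: image_image image_comp)
  then show ?case
    by (simp only: Suc.IH ladder_rotate_E)
qed simp

lemma funpow_ladder_rotate_0: "v < 2 * n \<Longrightarrow> (ladder_rotate n ^^ v) 0 = v"
  by (induction v) (auto simp: ladder_rotate_def nxt_eq_Suc)

lemma one_critical_vertex_mobius:
  assumes v: "v \<in> mobius_V n"
  shows "one_critical_vertex (mobius_V n) (mobius_E n) v"
proof -
  let ?f = "ladder_rotate n ^^ v"
  have f: "bij ?f"
    by (rule bij_fn[OF bij_ladder_rotate])
  have f0: "?f 0 = v"
    using v by (simp add: mobius_V_def funpow_ladder_rotate_0)
  note V = funpow_ladder_rotate_V[of v] and E = funpow_ladder_rotate_E[of v]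
  have del_V: "del_vertex_V (mobius_V n) v = ?f ` del_vertex_V (mobius_V n) 0"
    using del_vertex_V_image[OF f, of "mobius_V n" 0] V f0 by simp
  have del_E: "del_vertex_E (mobius_E n) v = (`) ?f ` del_vertex_E (mobius_E n) 0"
    using del_vertex_E_image[OF f, of "mobius_E n" 0] E f0 by simp
  have "graph_connected (del_vertex_V (mobius_V n) v) (del_vertex_E (mobius_E n) v)"
    unfolding del_V del_E by (rule graph_connected_image[OF f graph_connected_mobius_del])
  moreover have "max_genus (del_vertex_V (mobius_V n) v) (del_vertex_E (mobius_E n) v)
      = max_genus (mobius_V n) (mobius_E n) - 1"
    unfolding del_V del_E max_genus_image[OF f] max_genus_mobius_del max_genus_mobius
    by presburger
  ultimately show ?thesis
    using v by (simp add: one_critical_vertex_def)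
qed

end

theorem theorem2p1:
  fixes n :: nat
  assumes "n \<ge> 2"
  shows "\<forall>v \<in> mobius_V n. one_critical_vertex (mobius_V n) (mobius_E n) v"
  using mobius_ladder.one_critical_vertex_mobius[of n] assms by (simp add: mobius_ladder_def)

end
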